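(* Let $L$ be the free nilpotent Lie algebra of index $4$ on $X$, i.e. the free Lie algebra on $X$ modulo the ideal spanned by all Lie monomials of degree $\ge 4$ (equivalently, the free Lie algebra in the variety defined by $[[[a,b],c],d]=0$). Then the Lie algebra homomorphism $L\to \mathcal{A}s_3\langle X\rangle^{(-)}$ which is the identity on $X$ is injective; that is, $L$ embeds into the free third-type associative algebra $\mathcal{A}s_3\langle X\rangle$ equipped with the commutator $[a,b]=ab-ba$.
   Context: An associative algebra is called of the third type if it satisfies $abc+bac-bca-cba=0$ for all $a,b,c$. $\mathcal{A}s_3\langle X\rangle$ is the free such algebra on a countable set $X$ over a field of characteristic $0$, and $\mathcal{A}s_3\langle X\rangle^{(-)}$ denotes the same vector space with product $[a,b]=ab-ba$, which is a Lie algebra. *)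

theory Defs
  imports Main
begin

text \<open>Noncommutative polynomials without constant term: functions from words
(lists of generators) to coefficients, with finite support, vanishing on the empty word.\<close>

type_synonym 'k fa = "nat list \<Rightarrow> 'k"

definition fa_carrier :: "('k::field) fa set" where
  "fa_carrier = {p. finite {w. p w \<noteq> 0} \<and> p [] = 0}"

definition fa_zero :: "('k::field) fa" where
  "fa_zero = (\<lambda>w. 0)"

definition fa_add :: "('k::field) fa \<Rightarrow> 'k fa \<Rightarrow> 'k fa" where
  "fa_add p q = (\<lambda>w. p w + q w)"

definition fa_diff :: "('k::field) fa \<Rightarrow> 'k fa \<Rightarrow> 'k fa" where
  "fa_diff p q = (\<lambda>w. p w - q w)"

definition fa_smult :: "'k::field \<Rightarrow> 'k fa \<Rightarrow> 'k fa" where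
  "fa_smult c p = (\<lambda>w. c * p w)"

definition fa_mul :: "('k::field) fa \<Rightarrow> 'k fa \<Rightarrow> 'k fa" where
  "fa_mul p q = (\<lambda>w. \<Sum>i\<le>length w. p (take i w) * q (drop i w))"

definition fa_var :: "nat \<Rightarrow> ('k::field) fa" where
  "fa_var n = (\<lambda>w. if w = [n] then 1 else 0)"

definition fa_comm :: "('k::field) fa \<Rightarrow> 'k fa \<Rightarrow> 'k fa" where
  "fa_comm p q = fa_diff (fa_mul p q) (fa_mul q p)"

text \<open>The (two-sided) T-ideal of the free non-unital algebra generated by the
third-type identity abc + bac - bca - cba; the quotient is As_3<X>.\<close>

inductive_set third_ideal :: "('k::field) fa set" where
  gen: "a \<in> fa_carrier \<Longrightarrow> b \<in> fa_carrier \<Longrightarrow> c \<in> fa_carrier \<Longrightarrow>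
     fa_diff (fa_diff (fa_add (fa_mul (fa_mul a b) c) (fa_mul (fa_mul b a) c))
                      (fa_mul (fa_mul b c) a)) (fa_mul (fa_mul c b) a) \<in> third_ideal"
| zero: "fa_zero \<in> third_ideal"
| add: "u \<in> third_ideal \<Longrightarrow> v \<in> third_ideal \<Longrightarrow> fa_add u v \<in> third_ideal"
| smult: "u \<in> third_ideal \<Longrightarrow> fa_smult c u \<in> third_ideal"
| mult_left: "x \<in> fa_carrier \<Longrightarrow> u \<in> third_ideal \<Longrightarrow> fa_mul x u \<in> third_ideal"
| mult_right: "x \<in> fa_carrier \<Longrightarrow> u \<in> third_ideal \<Longrightarrow> fa_mul u x \<in> third_ideal"

text \<open>Formal Lie terms; the free Lie algebra of the variety [[[a,b],c],d] = 0 is the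
quotient of terms by the least congruence containing the vector space axioms,
bilinearity, alternation, Jacobi, and the nilpotency identity.\<close>

datatype 'k lterm = LV nat | LZ | LSc 'k "'k lterm" | LPl "'k lterm" "'k lterm"
  | LBr "'k lterm" "'k lterm"

inductive lie4_eq :: "('k::field) lterm \<Rightarrow> 'k lterm \<Rightarrow> bool" where
  refl: "lie4_eq s s"
| sym: "lie4_eq s t \<Longrightarrow> lie4_eq t s"
| trans: "lie4_eq s t \<Longrightarrow> lie4_eq t u \<Longrightarrow> lie4_eq s u"
| cong_sc: "lie4_eq s t \<Longrightarrow> lie4_eq (LSc c s) (LSc c t)"
| cong_pl: "lie4_eq s s' \<Longrightarrow> lie4_eq t t' \<Longrightarrow> lie4_eq (LPl s t) (LPl s' t')"
| cong_br: "lie4_eq s s' \<Longrightarrow> lie4_eq t t' \<Longrightarrow> lie4_eq (LBr s t) (LBr s' t')"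
| pl_assoc: "lie4_eq (LPl (LPl s t) u) (LPl s (LPl t u))"
| pl_comm: "lie4_eq (LPl s t) (LPl t s)"
| pl_zero: "lie4_eq (LPl s LZ) s"
| pl_neg: "lie4_eq (LPl s (LSc (-1) s)) LZ"
| sc_one: "lie4_eq (LSc 1 s) s"
| sc_sc: "lie4_eq (LSc a (LSc b s)) (LSc (a * b) s)"
| sc_distl: "lie4_eq (LSc a (LPl s t)) (LPl (LSc a s) (LSc a t))"
| sc_distr: "lie4_eq (LSc (a + b) s) (LPl (LSc a s) (LSc b s))"
| br_addl: "lie4_eq (LBr (LPl s t) u) (LPl (LBr s u) (LBr t u))"
| br_addr: "lie4_eq (LBr u (LPl s t)) (LPl (LBr u s) (LBr u t))"
| br_scl: "lie4_eq (LBr (LSc a s) t) (LSc a (LBr s t))"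
| br_scr: "lie4_eq (LBr s (LSc a t)) (LSc a (LBr s t))"
| br_alt: "lie4_eq (LBr s s) LZ"
| jacobi: "lie4_eq (LPl (LPl (LBr (LBr a b) c) (LBr (LBr b c) a)) (LBr (LBr c a) b)) LZ"
| nil4: "lie4_eq (LBr (LBr (LBr a b) c) d) LZ"

text \<open>The homomorphism sending generators to generators, with bracket the commutator
(computed in the free algebra; composing with the quotient map gives the map into
As_3<X>^(-)).\<close>

primrec lie_eval :: "('k::field) lterm \<Rightarrow> 'k fa" where
  "lie_eval (LV n) = fa_var n"
| "lie_eval LZ = fa_zero"
| "lie_eval (LSc c t) = fa_smult c (lie_eval t)"
| "lie_eval (LPl s t) = fa_add (lie_eval s) (lie_eval t)"
| "lie_eval (LBr s t) = fa_comm (lie_eval s) (lie_eval t)"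

end

theory Submission
  imports Defs "HOL.Modules"
begin

(* Let phi send a word x1...xn of the free algebra to (1/n)[...[x1,x2],...,xn] in L (zero for
   n >= 4, as L is nilpotent of index 4) and extend it linearly.  Then phi kills the T-ideal of the
   third-type identity: on three letters the identity becomes a consequence of antisymmetry of
   the bracket, and multiplying an element of the ideal, which has no terms of degree < 3, by
   anything yields only words of length >= 4.  On the other hand phi fixes every Lie element,
   because phi [p, q] = [phi p, phi q] for Lie elements p, q: the defect
   phi (uv) - phi (vu) - [phi u, phi v] on a pair of words survives only in bidegrees (1,2) and
   (2,1), where the Jacobi identity makes it symmetric in the two letters of the word of length 2,
   whereas Lie elements are antisymmetric in degree 2.  Hence s - t in the ideal forces
   s = phi s = phi t = t. *)

lemma lie4_equivp: "equivp lie4_eq"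
  by (rule equivpI; auto simp: reflp_def symp_def transp_def intro: lie4_eq.intros)

quotient_type (overloaded) 'k lie = "('k::field) lterm" / lie4_eq
  by (rule lie4_equivp)

instantiation lie :: (field) ab_group_add
begin

lift_definition zero_lie :: "'a lie" is LZ .

lift_definition plus_lie :: "'a lie \<Rightarrow> 'a lie \<Rightarrow> 'a lie" is LPl
  by (rule lie4_eq.cong_pl)

lift_definition uminus_lie :: "'a lie \<Rightarrow> 'a lie" is "LSc (-1)"
  by (rule lie4_eq.cong_sc)

lift_definition minus_lie :: "'a lie \<Rightarrow> 'a lie \<Rightarrow> 'a lie" is "\<lambda>s t. LPl s (LSc (-1) t)"
  by (intro lie4_eq.cong_pl lie4_eq.cong_sc)

instance
proof
  fix a b c :: "'a lie"
  show "a + b + c = a + (b + c)" by transfer (rule lie4_eq.pl_assoc)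
  show "a + b = b + a" by transfer (rule lie4_eq.pl_comm)
  show "0 + a = a" by transfer (meson lie4_eq.pl_comm lie4_eq.pl_zero lie4_eq.trans)
  show "- a + a = 0" by transfer (meson lie4_eq.pl_comm lie4_eq.pl_neg lie4_eq.trans)
  show "a - b = a + - b" by transfer (rule lie4_eq.refl)
qed

end

lift_definition sc :: "'k::field \<Rightarrow> 'k lie \<Rightarrow> 'k lie" is LSc
  by (rule lie4_eq.cong_sc)

lift_definition br :: "'k::field lie \<Rightarrow> 'k lie \<Rightarrow> 'k lie" is LBr
  by (rule lie4_eq.cong_br)

lift_definition var :: "nat \<Rightarrow> 'k::field lie" is LV .

interpretation lie_module: module "sc :: 'k::field \<Rightarrow> 'k lie \<Rightarrow> 'k lie"
proof
  fix a b :: 'k and x y :: "'k lie"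
  show "sc a (x + y) = sc a x + sc a y" by transfer (rule lie4_eq.sc_distl)
  show "sc (a + b) x = sc a x + sc b x" by transfer (rule lie4_eq.sc_distr)
  show "sc a (sc b x) = sc (a * b) x" by transfer (rule lie4_eq.sc_sc)
  show "sc 1 x = x" by transfer (rule lie4_eq.sc_one)
qed

lemma br_add_left: "br (x + y) z = br x z + br y z"
  by transfer (rule lie4_eq.br_addl)

lemma br_add_right: "br z (x + y) = br z x + br z y"
  by transfer (rule lie4_eq.br_addr)

lemma br_scale_left: "br (sc a x) y = sc a (br x y)"
  by transfer (rule lie4_eq.br_scl)

lemma br_scale_right: "br x (sc a y) = sc a (br x y)"
  by transfer (rule lie4_eq.br_scr)

lemma br_self [simp]: "br x x = 0"
  by transfer (rule lie4_eq.br_alt)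

lemma br_jacobi: "br (br x y) z + br (br y z) x + br (br z x) y = 0"
  by transfer (rule lie4_eq.jacobi)

interpretation br_left: additive "\<lambda>x. br x y" for y
  by standard (rule br_add_left)

interpretation br_right: additive "\<lambda>y. br x y" for x
  by standard (rule br_add_right)

lemma br_anticomm: "br x y = - br y x"
proof -
  have "br x y + br y x = br (x + y) (x + y)"
    unfolding br_add_left br_add_right by simp
  also have "\<dots> = 0"
    by simp
  finally show ?thesis
    by (simp add: eq_neg_iff_add_eq_0)
qed

lemma br_nilpotent [simp]: "br (br (br x y) z) w = 0"
  by transfer (rule lie4_eq.nil4)

lemma br_nilpotent_right [simp]: "br w (br (br x y) z) = 0"
  by (subst br_anticomm) simp

lemma br_nilpotent_br_br [simp]: "br (br x y) (br z w) = 0"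
proof -
  have "br (br (br z w) x) y + br (br x y) (br z w) + br (br y (br z w)) x = 0"
    by (rule br_jacobi)
  then show ?thesis
    by (subst (asm) br_anticomm[of y]) (simp add: br_left.minus)
qed

lemma sc_half_add_half: "sc (1/2) x + sc (1/2) x = (x :: 'k::field_char_0 lie)"
  by (simp flip: lie_module.scale_left_distrib)

lemma lie_eq_neg_self_imp_zero:
  fixes x :: "'k::field_char_0 lie"
  assumes "x = - x"
  shows "x = 0"
proof -
  have "x = sc (1/2) x + sc (1/2) x"
    by (simp only: sc_half_add_half)
  also have "\<dots> = 0"
    by (subst (2) assms) simp
  finally show ?thesis .
qed

lemma sc_add_sc: "sc a x + sc b x = sc (a + b) x"
  by (simp add: lie_module.scale_left_distrib)

definition fa_supp :: "('k::field) fa \<Rightarrow> nat list set" where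
  "fa_supp p = {w. p w \<noteq> 0}"

definition vanishes_below :: "nat \<Rightarrow> ('k::field) fa \<Rightarrow> bool" where
  "vanishes_below n p \<longleftrightarrow> (\<forall>w. length w < n \<longrightarrow> p w = 0)"

lemma fa_carrier_iff: "p \<in> fa_carrier \<longleftrightarrow> finite (fa_supp p) \<and> p [] = 0"
  by (simp add: fa_carrier_def fa_supp_def)

lemma fa_carrier_finite_supp: "p \<in> fa_carrier \<Longrightarrow> finite (fa_supp p)"
  by (simp add: fa_carrier_iff)

lemma fa_carrier_vanishes_below_1: "p \<in> fa_carrier \<Longrightarrow> vanishes_below 1 p"
  by (auto simp: fa_carrier_iff vanishes_below_def)

lemma nonempty_if_in_fa_supp: "p \<in> fa_carrier \<Longrightarrow> w \<in> fa_supp p \<Longrightarrow> w \<noteq> []"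
  by (auto simp: fa_carrier_iff fa_supp_def)

lemma splits_eq_image_take_drop:
  "{(u, v). u @ v = w} = (\<lambda>i. (take i w, drop i w)) ` {..length w}"
proof (intro equalityI subsetI)
  fix x assume "x \<in> {(u, v). u @ v = w}"
  then show "x \<in> (\<lambda>i. (take i w, drop i w)) ` {..length w}"
    by (intro image_eqI[where x = "length (fst x)"]) auto
qed auto

lemma fa_mul_eq_sum_splits: "fa_mul p q w = (\<Sum>(u, v) \<in> {(u, v). u @ v = w}. p u * q v)"
proof -
  have "inj_on (\<lambda>i. (take i w, drop i w)) {..length w}"
    by (rule inj_onI) (metis atMost_iff length_take min.absorb2 prod.inject)
  then show ?thesis
    by (simp add: splits_eq_image_take_drop sum.reindex fa_mul_def)
qed

lemma fa_supp_mul: "fa_supp (fa_mul p q) \<subseteq> (\<lambda>(u, v). u @ v) ` (fa_supp p \<times> fa_supp q)"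
proof
  fix w assume "w \<in> fa_supp (fa_mul p q)"
  then have "(\<Sum>(u, v) \<in> {(u, v). u @ v = w}. p u * q v) \<noteq> 0"
    by (simp add: fa_supp_def fa_mul_eq_sum_splits)
  then obtain u v where "u @ v = w" "p u * q v \<noteq> 0"
    by (auto elim: sum.not_neutral_contains_not_neutral)
  then show "w \<in> (\<lambda>(u, v). u @ v) ` (fa_supp p \<times> fa_supp q)"
    by (auto simp: fa_supp_def)
qed

lemma finite_fa_supp_mul:
  "finite (fa_supp p) \<Longrightarrow> finite (fa_supp q) \<Longrightarrow> finite (fa_supp (fa_mul p q))"
  by (rule finite_subset[OF fa_supp_mul]) simp

lemma vanishes_below_mono: "vanishes_below n p \<Longrightarrow> m \<le> n \<Longrightarrow> vanishes_below m p"
  by (simp add: vanishes_below_def)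

lemma vanishes_below_fa_mul:
  assumes "vanishes_below m p" "vanishes_below n q"
  shows "vanishes_below (m + n) (fa_mul p q)"
  unfolding vanishes_below_def
proof (intro allI impI)
  fix w :: "nat list" assume "length w < m + n"
  then have "p u * q v = 0" if "u @ v = w" for u v
    using assms that by (cases "length u < m") (auto simp: vanishes_below_def)
  then show "fa_mul p q w = 0"
    unfolding fa_mul_eq_sum_splits by (intro sum.neutral) auto
qed

lemma vanishes_below_3_fa_mul_mul:
  assumes "p \<in> fa_carrier" "q \<in> fa_carrier" "r \<in> fa_carrier"
  shows "vanishes_below 3 (fa_mul (fa_mul p q) r)"
proof -
  have "vanishes_below (1 + 1 + 1) (fa_mul (fa_mul p q) r)"
    using assms by (intro vanishes_below_fa_mul fa_carrier_vanishes_below_1)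
  then show ?thesis
    by (simp add: numeral_3_eq_3)
qed

lemma fa_zero_closed: "fa_zero \<in> fa_carrier"
  by (simp add: fa_carrier_def fa_zero_def)

lemma fa_var_closed: "fa_var n \<in> fa_carrier"
  by (simp add: fa_carrier_def fa_var_def)

lemma fa_add_closed: "p \<in> fa_carrier \<Longrightarrow> q \<in> fa_carrier \<Longrightarrow> fa_add p q \<in> fa_carrier"
  unfolding fa_carrier_iff
  by (auto simp: fa_supp_def fa_add_def intro: finite_subset[of _ "fa_supp p \<union> fa_supp q"])

lemma fa_diff_closed: "p \<in> fa_carrier \<Longrightarrow> q \<in> fa_carrier \<Longrightarrow> fa_diff p q \<in> fa_carrier"
  unfolding fa_carrier_iff
  by (auto simp: fa_supp_def fa_diff_def intro: finite_subset[of _ "fa_supp p \<union> fa_supp q"])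

lemma fa_smult_closed: "p \<in> fa_carrier \<Longrightarrow> fa_smult c p \<in> fa_carrier"
  unfolding fa_carrier_iff
  by (auto simp: fa_supp_def fa_smult_def intro: finite_subset[of _ "fa_supp p"])

lemma fa_mul_closed:
  assumes "p \<in> fa_carrier" "q \<in> fa_carrier"
  shows "fa_mul p q \<in> fa_carrier"
proof -
  have "finite (fa_supp (fa_mul p q))"
    using assms by (simp add: fa_carrier_iff finite_fa_supp_mul)
  moreover have "vanishes_below 2 (fa_mul p q)"
    using vanishes_below_fa_mul[OF assms[THEN fa_carrier_vanishes_below_1]] by (simp add: numeral_2_eq_2)
  ultimately show ?thesis
    by (simp add: fa_carrier_iff vanishes_below_def)
qed

lemma fa_comm_closed: "p \<in> fa_carrier \<Longrightarrow> q \<in> fa_carrier \<Longrightarrow> fa_comm p q \<in> fa_carrier"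
  unfolding fa_comm_def by (intro fa_diff_closed fa_mul_closed)

definition fa_lin :: "(nat list \<Rightarrow> 'k lie) \<Rightarrow> ('k::field) fa \<Rightarrow> 'k lie" where
  "fa_lin F p = (\<Sum>w\<in>fa_supp p. sc (p w) (F w))"

lemma fa_lin_eq_sum_superset:
  "finite S \<Longrightarrow> fa_supp p \<subseteq> S \<Longrightarrow> fa_lin F p = (\<Sum>w\<in>S. sc (p w) (F w))"
  unfolding fa_lin_def by (rule sum.mono_neutral_left) (auto simp: fa_supp_def)

lemma fa_lin_lincomb:
  assumes "finite (fa_supp p)" "finite (fa_supp q)"
  shows "fa_lin F (\<lambda>w. a * p w + b * q w) = sc a (fa_lin F p) + sc b (fa_lin F q)"
proof -
  let ?S = "fa_supp p \<union> fa_supp q"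
  have "fa_lin F p = (\<Sum>w\<in>?S. sc (p w) (F w))" "fa_lin F q = (\<Sum>w\<in>?S. sc (q w) (F w))"
    "fa_lin F (\<lambda>w. a * p w + b * q w) = (\<Sum>w\<in>?S. sc (a * p w + b * q w) (F w))"
    by (rule fa_lin_eq_sum_superset; use assms in \<open>auto simp: fa_supp_def\<close>)+
  then show ?thesis
    by (simp add: lie_module.scale_left_distrib lie_module.scale_sum_right sum.distrib)
qed

lemma fa_lin_add:
  "finite (fa_supp p) \<Longrightarrow> finite (fa_supp q) \<Longrightarrow>
    fa_lin F (fa_add p q) = fa_lin F p + fa_lin F q"
  using fa_lin_lincomb[of p q F 1 1] by (simp add: fa_add_def)

lemma fa_lin_diff:
  "finite (fa_supp p) \<Longrightarrow> finite (fa_supp q) \<Longrightarrow>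
    fa_lin F (fa_diff p q) = fa_lin F p - fa_lin F q"
  using fa_lin_lincomb[of p q F 1 "-1"] by (simp add: fa_diff_def)

lemma fa_lin_smult: "finite (fa_supp p) \<Longrightarrow> fa_lin F (fa_smult c p) = sc c (fa_lin F p)"
  using fa_lin_lincomb[of p p F c 0] by (simp add: fa_smult_def)

lemma fa_lin_eq_0: "(\<And>w. w \<in> fa_supp p \<Longrightarrow> F w = 0) \<Longrightarrow> fa_lin F p = 0"
  unfolding fa_lin_def by (rule sum.neutral) simp

lemma fa_lin_cong: "(\<And>w. w \<in> fa_supp p \<Longrightarrow> F w = G w) \<Longrightarrow> fa_lin F p = fa_lin G p"
  unfolding fa_lin_def by (rule sum.cong) simp_all

lemma fa_lin_fun_add: "fa_lin (\<lambda>w. F w + G w) p = fa_lin F p + fa_lin G p"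
  by (simp add: fa_lin_def lie_module.scale_right_distrib sum.distrib)

lemma fa_lin_fun_diff: "fa_lin (\<lambda>w. F w - G w) p = fa_lin F p - fa_lin G p"
  by (simp add: fa_lin_def lie_module.scale_right_diff_distrib sum_subtractf)

lemma fa_lin_swap:
  "fa_lin (\<lambda>u. fa_lin (\<lambda>v. G u v) q) p = fa_lin (\<lambda>v. fa_lin (\<lambda>u. G u v) p) q"
  unfolding fa_lin_def lie_module.scale_sum_right lie_module.scale_scale
  by (subst sum.swap) (simp add: mult.commute)

lemma fa_lin_br: "br (fa_lin F p) (fa_lin G q) = fa_lin (\<lambda>u. fa_lin (\<lambda>v. br (F u) (G v)) q) p"
  unfolding fa_lin_def br_left.sum br_right.sum br_scale_left br_scale_right
  by (simp add: lie_module.scale_sum_right mult.commute) (rule sum.swap)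

lemma fa_lin_mul:
  assumes "finite (fa_supp p)" "finite (fa_supp q)"
  shows "fa_lin F (fa_mul p q) = fa_lin (\<lambda>u. fa_lin (\<lambda>v. F (u @ v)) q) p"
proof -
  define A where "A = fa_supp p \<times> fa_supp q"
  define h where "h x = sc (p (fst x) * q (snd x)) (F (fst x @ snd x))" for x
  have "finite A"
    using assms by (simp add: A_def)
  have "fa_mul p q w = (\<Sum>x \<in> {x \<in> A. fst x @ snd x = w}. p (fst x) * q (snd x))" for w
  proof -
    have "finite {(u, v). u @ v = w}"
      by (simp add: splits_eq_image_take_drop)
    then show ?thesis
      unfolding fa_mul_eq_sum_splits case_prod_beta
      by (intro sum.mono_neutral_right) (auto simp: A_def fa_supp_def)
  qed
  then have "fa_lin F (fa_mul p q)
      = (\<Sum>w \<in> (\<lambda>x. fst x @ snd x) ` A. \<Sum>x \<in> {x \<in> A. fst x @ snd x = w}. h x)"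
    using fa_supp_mul[of p q] \<open>finite A\<close>
    by (subst fa_lin_eq_sum_superset[of "(\<lambda>x. fst x @ snd x) ` A"])
       (auto simp: A_def h_def case_prod_beta lie_module.scale_sum_left intro!: sum.cong)
  also have "\<dots> = (\<Sum>x\<in>A. h x)"
    by (rule sum.image_gen[OF \<open>finite A\<close>, symmetric])
  also have "\<dots> = fa_lin (\<lambda>u. fa_lin (\<lambda>v. F (u @ v)) q) p"
    by (simp add: A_def h_def fa_lin_def sum.cartesian_product case_prod_beta lie_module.scale_sum_right)
  finally show ?thesis .
qed

definition fa_lin3 ::
  "(nat list \<Rightarrow> nat list \<Rightarrow> nat list \<Rightarrow> 'k lie) \<Rightarrow>
    ('k::field) fa \<Rightarrow> 'k fa \<Rightarrow> 'k fa \<Rightarrow> 'k lie"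
where
  "fa_lin3 G a b c = fa_lin (\<lambda>u. fa_lin (\<lambda>v. fa_lin (\<lambda>z. G u v z) c) b) a"

lemma fa_lin3_swap12: "fa_lin3 G a b c = fa_lin3 (\<lambda>v u z. G u v z) b a c"
  unfolding fa_lin3_def by (rule fa_lin_swap)

lemma fa_lin3_swap23: "fa_lin3 G a b c = fa_lin3 (\<lambda>u z v. G u v z) a c b"
  unfolding fa_lin3_def by (simp add: fa_lin_swap[of _ b])

lemma fa_lin_mul3:
  assumes "finite (fa_supp a)" "finite (fa_supp b)" "finite (fa_supp c)"
  shows "fa_lin F (fa_mul (fa_mul a b) c) = fa_lin3 (\<lambda>u v z. F (u @ v @ z)) a b c"
  using assms by (simp add: fa_lin3_def fa_lin_mul finite_fa_supp_mul)

section \<open>The normalised Dynkin map kills the third-type ideal\<close>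

(* The Dynkin-Specht-Wever bracketing divided by the word length; phi above is fa_lin dynkin. *)
fun dynkin :: "nat list \<Rightarrow> 'k::field lie" where
  "dynkin [a] = var a"
| "dynkin [a, b] = sc (1/2) (br (var a) (var b))"
| "dynkin [a, b, c] = sc (1/3) (br (br (var a) (var b)) (var c))"
| "dynkin _ = 0"

lemma dynkin_long: "4 \<le> length w \<Longrightarrow> dynkin w = 0"
  by (cases w rule: dynkin.cases) auto

lemma dynkin_third_type:
  assumes "u \<noteq> []" "v \<noteq> []" "z \<noteq> []"
  shows "dynkin (u @ v @ z) + dynkin (v @ u @ z) - dynkin (v @ z @ u) - dynkin (z @ v @ u)
    = (0 :: 'k::field lie)"
proof (cases "length u = 1 \<and> length v = 1 \<and> length z = 1")
  case True
  then obtain i j k where "u = [i]" "v = [j]" "z = [k]"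
    by (metis One_nat_def length_0_conv length_Suc_conv)
  moreover have "br (var j) (var i) = - br (var i) (var j :: 'k lie)"
    and "br (var k) (var j) = - br (var j) (var k :: 'k lie)"
    by (rule br_anticomm)+
  ultimately show ?thesis
    by (simp add: br_left.minus)
next
  case False
  moreover have "0 < length u" "0 < length v" "0 < length z"
    using assms by auto
  ultimately have "4 \<le> length u + length v + length z"
    by arith
  then show ?thesis
    by (simp add: dynkin_long)
qed

lemma fa_lin_dynkin_vanishes_below_4:
  assumes "vanishes_below 4 p"
  shows "fa_lin dynkin p = 0"
proof (rule fa_lin_eq_0)
  fix w assume "w \<in> fa_supp p"
  with assms have "4 \<le> length w"
    by (auto simp: vanishes_below_def fa_supp_def not_le[symmetric])
  then show "dynkin w = 0"
    by (rule dynkin_long)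
qed

lemma fa_lin_dynkin_third_type_gen:
  assumes "a \<in> fa_carrier" "b \<in> fa_carrier" "c \<in> fa_carrier"
  shows "fa_lin dynkin (fa_diff (fa_diff (fa_add (fa_mul (fa_mul a b) c) (fa_mul (fa_mul b a) c))
      (fa_mul (fa_mul b c) a)) (fa_mul (fa_mul c b) a)) = 0"
proof -
  let ?abc = "fa_mul (fa_mul a b) c" and ?bac = "fa_mul (fa_mul b a) c"
    and ?bca = "fa_mul (fa_mul b c) a" and ?cba = "fa_mul (fa_mul c b) a"
  have "?abc \<in> fa_carrier" "?bac \<in> fa_carrier" "?bca \<in> fa_carrier" "?cba \<in> fa_carrier"
    using assms by (simp_all add: fa_mul_closed)
  then have "fa_lin dynkin (fa_diff (fa_diff (fa_add ?abc ?bac) ?bca) ?cba)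
    = fa_lin dynkin ?abc + fa_lin dynkin ?bac - fa_lin dynkin ?bca - fa_lin dynkin ?cba"
    by (simp add: fa_lin_add fa_lin_diff fa_add_closed fa_diff_closed fa_carrier_finite_supp)
  also have "\<dots> = fa_lin3 (\<lambda>u v z. dynkin (u @ v @ z)) a b c
      + fa_lin3 (\<lambda>u v z. dynkin (v @ u @ z)) a b c
      - fa_lin3 (\<lambda>u v z. dynkin (v @ z @ u)) a b c
      - fa_lin3 (\<lambda>u v z. dynkin (z @ v @ u)) a b c"
    using assms
    by (simp add: fa_carrier_finite_supp fa_lin_mul3 fa_lin3_swap12[of _ b a c]
        fa_lin3_swap23[of _ b c a] fa_lin3_swap12[of _ c b a])
  also have "\<dots> = fa_lin3 (\<lambda>u v z. dynkin (u @ v @ z) + dynkin (v @ u @ z)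
      - dynkin (v @ z @ u) - dynkin (z @ v @ u)) a b c"
    by (simp add: fa_lin3_def fa_lin_fun_add fa_lin_fun_diff)
  also have "\<dots> = 0"
    unfolding fa_lin3_def
    by (intro fa_lin_eq_0) (use assms in \<open>simp add: dynkin_third_type nonempty_if_in_fa_supp\<close>)
  finally show ?thesis .
qed

lemma third_ideal_subset_fa_carrier: "u \<in> third_ideal \<Longrightarrow> u \<in> fa_carrier"
  by (induction rule: third_ideal.induct)
    (simp_all add: fa_add_closed fa_diff_closed fa_smult_closed fa_mul_closed fa_zero_closed)

lemma third_ideal_vanishes_below_3: "u \<in> third_ideal \<Longrightarrow> vanishes_below 3 u"
proof (induction rule: third_ideal.induct)
  case (gen a b c)
  then show ?case
    using vanishes_below_3_fa_mul_mul[of a b c] vanishes_below_3_fa_mul_mul[of b a c]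
      vanishes_below_3_fa_mul_mul[of b c a] vanishes_below_3_fa_mul_mul[of c b a]
    by (simp add: vanishes_below_def fa_add_def fa_diff_def)
next
  case (mult_left x u)
  then show ?case
    using vanishes_below_fa_mul[OF fa_carrier_vanishes_below_1] vanishes_below_mono by fastforce
next
  case (mult_right x u)
  then show ?case
    using vanishes_below_fa_mul[OF _ fa_carrier_vanishes_below_1] vanishes_below_mono by fastforce
qed (simp_all add: vanishes_below_def fa_zero_def fa_add_def fa_smult_def)

lemma fa_lin_dynkin_third_ideal: "u \<in> third_ideal \<Longrightarrow> fa_lin dynkin u = 0"
proof (induction rule: third_ideal.induct)
  case (gen a b c)
  then show ?case
    by (rule fa_lin_dynkin_third_type_gen)
next
  case zero
  show ?case
    by (simp add: fa_lin_def fa_supp_def fa_zero_def)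
next
  case (add u v)
  then show ?case
    by (simp add: fa_lin_add fa_carrier_finite_supp third_ideal_subset_fa_carrier)
next
  case (smult u c)
  then show ?case
    by (simp add: fa_lin_smult fa_carrier_finite_supp third_ideal_subset_fa_carrier)
next
  case (mult_left x u)
  then have "vanishes_below (1 + 3) (fa_mul x u)"
    by (intro vanishes_below_fa_mul fa_carrier_vanishes_below_1 third_ideal_vanishes_below_3)
  then show ?case
    by (simp add: fa_lin_dynkin_vanishes_below_4)
next
  case (mult_right x u)
  then have "vanishes_below (3 + 1) (fa_mul u x)"
    by (intro vanishes_below_fa_mul fa_carrier_vanishes_below_1 third_ideal_vanishes_below_3)
  then show ?case
    by (simp add: fa_lin_dynkin_vanishes_below_4)
qed

section \<open>The normalised Dynkin map fixes Lie elements\<close>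

lemma lie_eval_closed: "lie_eval s \<in> fa_carrier"
  by (induction s) (simp_all add: fa_var_closed fa_zero_closed fa_smult_closed fa_add_closed fa_comm_closed)

definition antisym2 :: "('k::field) fa \<Rightarrow> bool" where
  "antisym2 p \<longleftrightarrow> (\<forall>a b. p [a, b] = - p [b, a])"

lemma fa_mul_length_2: "p [] = 0 \<Longrightarrow> q [] = 0 \<Longrightarrow> fa_mul p q [a, b] = p [a] * q [b]"
  by (simp add: fa_mul_def atMost_Suc)

lemma antisym2_smult: "antisym2 p \<Longrightarrow> antisym2 (fa_smult c p)"
  unfolding antisym2_def fa_smult_def by (metis mult_minus_right)

lemma antisym2_add: "antisym2 p \<Longrightarrow> antisym2 q \<Longrightarrow> antisym2 (fa_add p q)"
  unfolding antisym2_def fa_add_def by (metis minus_add_distrib)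

lemma antisym2_lie_eval: "antisym2 (lie_eval s)"
proof (induction s)
  case (LV n)
  show ?case
    by (simp add: antisym2_def fa_var_def)
next
  case LZ
  show ?case
    by (simp add: antisym2_def fa_zero_def)
next
  case (LSc c t)
  then show ?case
    by (simp add: antisym2_smult)
next
  case (LPl s t)
  then show ?case
    by (simp add: antisym2_add)
next
  case (LBr s t)
  have "lie_eval s [] = 0" "lie_eval t [] = 0"
    using lie_eval_closed[of s] lie_eval_closed[of t] by (simp_all add: fa_carrier_iff)
  then have "fa_comm (lie_eval s) (lie_eval t) [a, b]
      = lie_eval s [a] * lie_eval t [b] - lie_eval t [a] * lie_eval s [b]" for a b
    by (simp add: fa_comm_def fa_diff_def fa_mul_length_2)
  then show ?case
    by (simp add: antisym2_def)
qed

lemma fa_lin_sym2_antisym2_eq_0: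
  fixes G :: "nat list \<Rightarrow> 'k::field_char_0 lie"
  assumes "finite (fa_supp p)" "antisym2 p"
    and G_sym: "\<And>a b. G [a, b] = G [b, a]" and G_deg: "\<And>w. length w \<noteq> 2 \<Longrightarrow> G w = 0"
  shows "fa_lin G p = 0"
proof (rule lie_eq_neg_self_imp_zero)
  let ?S = "fa_supp p \<union> rev ` fa_supp p"
  have rev_S: "rev ` ?S = ?S"
    by (simp add: image_Un image_image Un_commute)
  have rev_term: "sc (p (rev w)) (G (rev w)) = - sc (p w) (G w)" for w
  proof (cases "length w = 2")
    case True
    then obtain a b where "w = [a, b]"
      by (auto simp: numeral_2_eq_2 length_Suc_conv)
    moreover have "p [b, a] = - p [a, b]"
      using \<open>antisym2 p\<close> unfolding antisym2_def by blast
    ultimately show ?thesis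
      using G_sym[of b a] by simp
  next
    case False
    then show ?thesis
      by (simp add: G_deg)
  qed
  have lin_S: "fa_lin G p = (\<Sum>w\<in>?S. sc (p w) (G w))"
    by (rule fa_lin_eq_sum_superset) (use assms(1) in auto)
  also have "\<dots> = (\<Sum>w\<in>rev ` ?S. sc (p w) (G w))"
    by (simp only: rev_S)
  also have "\<dots> = (\<Sum>w\<in>?S. sc (p (rev w)) (G (rev w)))"
    by (simp add: sum.reindex inj_on_def)
  also have "\<dots> = - fa_lin G p"
    by (simp add: rev_term sum_negf lin_S)
  finally show "fa_lin G p = - fa_lin G p" .
qed

definition dynkin_defect :: "nat list \<Rightarrow> nat list \<Rightarrow> 'k::field lie" where
  "dynkin_defect u v = dynkin (u @ v) - dynkin (v @ u) - br (dynkin u) (dynkin v)"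

lemma dynkin_defect_swap: "dynkin_defect v u = - dynkin_defect u v"
  unfolding dynkin_defect_def by (subst br_anticomm) (simp add: algebra_simps)

lemma dynkin_defect_1_1: "dynkin_defect [i] [j] = (0 :: 'k::field_char_0 lie)"
proof -
  have "br (var j) (var i) = - br (var i) (var j :: 'k lie)"
    by (rule br_anticomm)
  then show ?thesis
    by (simp add: dynkin_defect_def sc_half_add_half)
qed

lemma dynkin_defect_1_2_sym: "dynkin_defect [i] [j, k] = (dynkin_defect [i] [k, j] :: 'k::field_char_0 lie)"
proof -
  define A :: "'k lie" where "A = br (br (var i) (var j)) (var k)"
  define B :: "'k lie" where "B = br (br (var j) (var k)) (var i)"
  define C :: "'k lie" where "C = br (br (var k) (var i)) (var j)"
  have "A + B + C = 0"
    unfolding A_def B_def C_def by (rule br_jacobi)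
  then have C: "C = - A - B"
    by (simp add: eq_neg_iff_add_eq_0 algebra_simps)
  have "br (var i) (var k) = - br (var k) (var i :: 'k lie)"
    and "br (var k) (var j) = - br (var j) (var k :: 'k lie)"
    and "br (var i) (br (var j) (var k)) = - B"
    unfolding B_def by (rule br_anticomm)+
  then have jk: "dynkin_defect [i] [j, k] = sc (1/3) A - sc (1/3) B + sc (1/2) B"
    and kj: "dynkin_defect [i] [k, j] = - sc (1/3) C + sc (1/3) B - sc (1/2) B"
    by (simp_all add: dynkin_defect_def A_def B_def C_def br_scale_right br_left.minus br_right.minus)
  (* The two defects differ by one third of the Jacobi sum A + B + C. *)
  show ?thesis
    unfolding jk kj C by (simp add: algebra_simps) (simp add: add.assoc[symmetric] sc_add_sc)
qed

lemma br_dynkin_long: "4 \<le> length u + length v \<Longrightarrow> br (dynkin u) (dynkin v) = 0"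
  by (cases u rule: dynkin.cases; cases v rule: dynkin.cases)
    (simp_all add: br_scale_left br_scale_right br_left.zero br_right.zero)

lemma dynkin_defect_long: "4 \<le> length u + length v \<Longrightarrow> dynkin_defect u v = 0"
  by (simp add: dynkin_defect_def dynkin_long br_dynkin_long add.commute)

definition dynkin_defect12 :: "nat list \<Rightarrow> nat list \<Rightarrow> 'k::field lie" where
  "dynkin_defect12 u v = (if length u = 1 \<and> length v = 2 then dynkin_defect u v else 0)"

lemma dynkin_defect12_sym: "dynkin_defect12 u [a, b] = (dynkin_defect12 u [b, a] :: 'k::field_char_0 lie)"
proof (cases "length u = 1")
  case True
  then obtain i where "u = [i]"
    by (auto simp: length_Suc_conv)
  then show ?thesis
    by (simp add: dynkin_defect12_def dynkin_defect_1_2_sym)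
qed (simp add: dynkin_defect12_def)

lemma dynkin_defect_eq_defect12:
  assumes "u \<noteq> []" "v \<noteq> []"
  shows "dynkin_defect u v = dynkin_defect12 u v - (dynkin_defect12 v u :: 'k::field_char_0 lie)"
proof -
  have "0 < length u" "0 < length v"
    using assms by auto
  then consider "length u = 1" "length v = 1" | "length u = 1" "length v = 2"
    | "length u = 2" "length v = 1" | "4 \<le> length u + length v"
    by arith
  then show ?thesis
  proof cases
    case 1
    then obtain i j where "u = [i]" "v = [j]"
      by (auto simp: length_Suc_conv)
    then show ?thesis
      by (simp add: dynkin_defect12_def dynkin_defect_1_1)
  next
    case 2
    then show ?thesis
      by (simp add: dynkin_defect12_def)
  next
    case 3
    then show ?thesis
      by (simp add: dynkin_defect12_def dynkin_defect_swap[of v u])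
  next
    case 4
    then show ?thesis
      by (auto simp: dynkin_defect12_def dynkin_defect_long)
  qed
qed

lemma fa_lin_dynkin_comm:
  fixes p q :: "'k::field_char_0 fa"
  assumes "p \<in> fa_carrier" "q \<in> fa_carrier" "antisym2 p" "antisym2 q"
  shows "fa_lin dynkin (fa_comm p q) = br (fa_lin dynkin p) (fa_lin dynkin q)"
proof -
  have fin: "finite (fa_supp p)" "finite (fa_supp q)"
    using assms by (simp_all add: fa_carrier_finite_supp)
  have defect12_0: "fa_lin (\<lambda>v. dynkin_defect12 u v) r = (0 :: 'k lie)"
    if "finite (fa_supp r)" "antisym2 r" for u r
    using that
    by (rule fa_lin_sym2_antisym2_eq_0[where G = "dynkin_defect12 u"])
      (rule dynkin_defect12_sym, simp add: dynkin_defect12_def)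
  have "fa_lin dynkin (fa_comm p q) - br (fa_lin dynkin p) (fa_lin dynkin q)
      = fa_lin (\<lambda>u. fa_lin (\<lambda>v. dynkin_defect u v) q) p"
    using fin by (simp add: fa_comm_def fa_lin_diff finite_fa_supp_mul fa_lin_mul fa_lin_br
        dynkin_defect_def fa_lin_fun_diff fa_lin_swap[of _ p q])
  also have "\<dots> = fa_lin (\<lambda>u. fa_lin (\<lambda>v. dynkin_defect12 u v - dynkin_defect12 v u) q) p"
    by (intro fa_lin_cong)
      (use assms(1,2) in \<open>simp add: dynkin_defect_eq_defect12 nonempty_if_in_fa_supp\<close>)
  also have "\<dots> = fa_lin (\<lambda>u. fa_lin (\<lambda>v. dynkin_defect12 u v) q) p
      - fa_lin (\<lambda>v. fa_lin (\<lambda>u. dynkin_defect12 v u) p) q"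
    by (simp add: fa_lin_fun_diff fa_lin_swap[of _ p q])
  also have "\<dots> = 0"
    using fin assms(3,4) by (simp add: defect12_0 fa_lin_eq_0)
  finally show ?thesis
    by simp
qed

lemma fa_lin_dynkin_lie_eval: "fa_lin dynkin (lie_eval s) = (abs_lie s :: 'k::field_char_0 lie)"
proof (induction s)
  case (LV n)
  have "fa_supp (fa_var n :: 'k fa) = {[n]}"
    by (auto simp: fa_supp_def fa_var_def)
  then show ?case
    by (simp add: fa_lin_def fa_var_def var.abs_eq)
next
  case LZ
  show ?case
    by (simp add: fa_lin_def fa_supp_def fa_zero_def zero_lie.abs_eq)
next
  case (LSc c t)
  then show ?case
    by (simp add: fa_lin_smult fa_carrier_finite_supp lie_eval_closed sc.abs_eq)
next
  case (LPl s t)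
  then show ?case
    by (simp add: fa_lin_add fa_carrier_finite_supp lie_eval_closed plus_lie.abs_eq)
next
  case (LBr s t)
  then show ?case
    by (simp add: fa_lin_dynkin_comm lie_eval_closed antisym2_lie_eval br.abs_eq)
qed

theorem mainTheorem7:
  fixes s t :: "('k::field_char_0) lterm"
  assumes "fa_diff (lie_eval s) (lie_eval t) \<in> third_ideal"
  shows "lie4_eq s t"
proof -
  have "abs_lie s - abs_lie t = fa_lin dynkin (fa_diff (lie_eval s) (lie_eval t))"
    by (simp add: fa_lin_diff fa_carrier_finite_supp lie_eval_closed fa_lin_dynkin_lie_eval)
  also have "\<dots> = 0"
    using assms by (rule fa_lin_dynkin_third_ideal)
  finally show ?thesis
    by (simp add: lie.abs_eq_iff)
qed

end
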